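(* Let $J_0$ be a two-sided $p$-periodic Jacobi matrix with discriminant $\Delta_{J_0}$ and isospectral torus $\mathcal{T}_{J_0}$. Let $J$ be a two-sided (not a priori periodic) Jacobi matrix. Then $\Delta_{J_0}(J)=S^p+S^{-p}$ if and only if $J\in\mathcal{T}_{J_0}$, where $S$ is the right shift on $\ell^2(\mathbb{Z})$.
   Context: A two-sided Jacobi matrix is the bounded tridiagonal operator on $\ell^2(\mathbb{Z})$ with $J_{nn}=b_n\in\mathbb{R}$, $J_{n,n+1}=J_{n+1,n}=a_n>0$ ($\{a_n,b_n\}$ bounded). $J_0$ is $p$-periodic if its parameters are $p$-periodic. Its discriminant is the polynomial $\Delta_{J_0}(x)=\mathrm{Tr}(\Lambda_p(x)\cdots\Lambda_1(x))$, $\Lambda_n(x)=\frac1{a^{(0)}_n}\begin{pmatrix}x-b^{(0)}_n&-1\\(a^{(0)}_n)^2&0\end{pmatrix}$, of degree $p$; $\Delta_{J_0}(J)$ is this polynomial applied to the operator $J$. The isospectral torus $\mathcal{T}_{J_0}$ is the set of two-sided $p$-periodic Jacobi matrices whose discriminant equals $\Delta_{J_0}$ (equivalently, with the same spectrum as $J_0$). The right shift is $(Su)_n=u_{n-1}$. *)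

theory Defs
  imports "HOL-Analysis.Analysis" "HOL-Computational_Algebra.Polynomial"
begin

text \<open>A two-sided Jacobi matrix is given by its parameters a, b :: int \<Rightarrow> real:
  diagonal entries b n, off-diagonal entries J(n,n+1) = J(n+1,n) = a n.\<close>

definition jacobi_params :: "(int \<Rightarrow> real) \<Rightarrow> (int \<Rightarrow> real) \<Rightarrow> bool" where
  "jacobi_params a b \<longleftrightarrow> (\<forall>n. a n > 0) \<and> bounded (range a) \<and> bounded (range b)"

definition periodic_params :: "nat \<Rightarrow> (int \<Rightarrow> real) \<Rightarrow> (int \<Rightarrow> real) \<Rightarrow> bool" where
  "periodic_params p a b \<longleftrightarrow> p \<ge> 1 \<and> (\<forall>n. a (n + int p) = a n \<and> b (n + int p) = b n)"

definition jacobi_op :: "(int \<Rightarrow> real) \<Rightarrow> (int \<Rightarrow> real) \<Rightarrow> (int \<Rightarrow> real) \<Rightarrow> (int \<Rightarrow> real)" where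
  "jacobi_op a b u = (\<lambda>n. a (n - 1) * u (n - 1) + b n * u n + a n * u (n + 1))"

definition shift_right :: "(int \<Rightarrow> real) \<Rightarrow> (int \<Rightarrow> real)" where
  "shift_right u = (\<lambda>n. u (n - 1))"

definition shift_left :: "(int \<Rightarrow> real) \<Rightarrow> (int \<Rightarrow> real)" where
  "shift_left u = (\<lambda>n. u (n + 1))"

definition l2_seq :: "(int \<Rightarrow> real) \<Rightarrow> bool" where
  "l2_seq u \<longleftrightarrow> (\<lambda>n. (u n)\<^sup>2) summable_on UNIV"

definition poly_op :: "real poly \<Rightarrow> (('i \<Rightarrow> real) \<Rightarrow> ('i \<Rightarrow> real)) \<Rightarrow> ('i \<Rightarrow> real) \<Rightarrow> ('i \<Rightarrow> real)" where
  "poly_op P T u = (\<lambda>n. \<Sum>i\<le>degree P. coeff P i * (T ^^ i) u n)"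

text \<open>2x2 matrices of polynomials (indices 0,1).\<close>
type_synonym pmat2 = "nat \<Rightarrow> nat \<Rightarrow> real poly"

definition m2mult :: "pmat2 \<Rightarrow> pmat2 \<Rightarrow> pmat2" where
  "m2mult A B = (\<lambda>i j. \<Sum>k<2. A i k * B k j)"

definition m2id :: pmat2 where
  "m2id = (\<lambda>i j. if i = j then 1 else 0)"

definition transfer :: "(int \<Rightarrow> real) \<Rightarrow> (int \<Rightarrow> real) \<Rightarrow> int \<Rightarrow> pmat2" where
  "transfer a b n = (\<lambda>i j. smult (1 / a n)
      (if i = 0 \<and> j = 0 then [:- b n, 1:]
       else if i = 0 \<and> j = 1 then [:-1:]
       else if i = 1 \<and> j = 0 then [:(a n)\<^sup>2:]
       else 0))"

fun transfer_prod :: "(int \<Rightarrow> real) \<Rightarrow> (int \<Rightarrow> real) \<Rightarrow> nat \<Rightarrow> pmat2" where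
  "transfer_prod a b 0 = m2id"
| "transfer_prod a b (Suc k) = m2mult (transfer a b (int (Suc k))) (transfer_prod a b k)"

definition discriminant :: "nat \<Rightarrow> (int \<Rightarrow> real) \<Rightarrow> (int \<Rightarrow> real) \<Rightarrow> real poly" where
  "discriminant p a b = transfer_prod a b p 0 0 + transfer_prod a b p 1 1"

definition iso_torus :: "nat \<Rightarrow> (int \<Rightarrow> real) \<Rightarrow> (int \<Rightarrow> real) \<Rightarrow> ((int \<Rightarrow> real) \<times> (int \<Rightarrow> real)) set" where
  "iso_torus p a0 b0 = {(a, b). jacobi_params a b \<and> periodic_params p a b
      \<and> discriminant p a b = discriminant p a0 b0}"

end

theory Submission
  imports Defs
begin

text \<open>
  For a \<open>p\<close>-periodic Jacobi matrix the transfer matrix over one period has determinant 1 and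
  trace \<open>\<Delta>(x)\<close>, so by Cayley--Hamilton every solution of \<open>J u = x u\<close> satisfies
  \<open>u(n + p) + u(n - p) = \<Delta>(x) u(n)\<close>. The operator \<open>\<Delta>(J) - S\<^sup>p - S\<^sup>-\<^sup>p\<close> is banded of width
  \<open>p\<close>, so at \<open>n\<close> it is a linear combination of the values on \<open>[n - p, n + p]\<close>; it annihilates
  all such solutions for all \<open>x\<close>, whose values there are polynomials in \<open>x\<close> of distinct degrees,
  hence it vanishes (the magic formula).

  Conversely, if \<open>\<Delta>\<^sub>0(J) = S\<^sup>p + S\<^sup>-\<^sup>p\<close> then \<open>J\<close> commutes with \<open>S\<^sup>p + S\<^sup>-\<^sup>p\<close>, and testing this on unit
  vectors shows that \<open>J\<close> is \<open>p\<close>-periodic. By the magic formula \<open>(\<Delta>\<^sub>J - \<Delta>\<^sub>0)(J)\<close> then kills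
  \<open>\<delta>\<^sub>0\<close>; as \<open>(J\<^sup>k \<delta>\<^sub>0)(k) = a\<^sub>0 \<cdots> a\<^sub>k\<^sub>-\<^sub>1 \<noteq> 0\<close> and \<open>(J\<^sup>i \<delta>\<^sub>0)(k) = 0\<close> for \<open>i < k\<close>, this forces \<open>\<Delta>\<^sub>J = \<Delta>\<^sub>0\<close>.
\<close>

section \<open>Jacobi operators acting on sequences\<close>

definition unit_seq :: "int \<Rightarrow> int \<Rightarrow> real" where
  "unit_seq m = (\<lambda>k. if k = m then 1 else 0)"

lemma funpow_shift_right: "(shift_right ^^ k) u n = u (n - int k)"
  by (induction k arbitrary: n) (auto simp: shift_right_def algebra_simps)

lemma funpow_shift_left: "(shift_left ^^ k) u n = u (n + int k)"
  by (induction k arbitrary: n) (auto simp: shift_left_def algebra_simps)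

lemma l2_seq_finite_support:
  assumes "finite {n. u n \<noteq> 0}"
  shows "l2_seq u"
proof -
  have "(\<lambda>n. (u n)\<^sup>2) summable_on {n. u n \<noteq> 0}"
    using assms by simp
  moreover have "(\<lambda>n. (u n)\<^sup>2) summable_on {n. u n \<noteq> 0} \<longleftrightarrow> (\<lambda>n. (u n)\<^sup>2) summable_on UNIV"
    by (rule summable_on_cong_neutral) auto
  ultimately show ?thesis
    unfolding l2_seq_def by simp
qed

lemma funpow_jacobi_op_Suc:
  "(jacobi_op a b ^^ Suc i) u n
     = a (n - 1) * (jacobi_op a b ^^ i) u (n - 1) + b n * (jacobi_op a b ^^ i) u n
       + a n * (jacobi_op a b ^^ i) u (n + 1)"
  by (simp add: jacobi_op_def)

lemma funpow_jacobi_op_local: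
  assumes "\<And>k. \<bar>k - n\<bar> \<le> int i \<Longrightarrow> v k = w k"
  shows "(jacobi_op a b ^^ i) v n = (jacobi_op a b ^^ i) w n"
  using assms
proof (induction i arbitrary: n)
  case 0
  then show ?case by simp
next
  case (Suc i)
  have "(jacobi_op a b ^^ i) v m = (jacobi_op a b ^^ i) w m" if "\<bar>m - n\<bar> \<le> 1" for m
    by (rule Suc.IH) (use Suc.prems that in auto)
  then show ?case
    unfolding funpow_jacobi_op_Suc by simp
qed

lemma jacobi_op_sum:
  "jacobi_op a b (\<lambda>m. \<Sum>j\<in>A. c j * f j m) n = (\<Sum>j\<in>A. c j * jacobi_op a b (f j) n)"
  by (simp add: jacobi_op_def algebra_simps sum.distrib sum_distrib_left)

lemma funpow_jacobi_op_sum: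
  "(jacobi_op a b ^^ i) (\<lambda>m. \<Sum>j\<in>A. c j * f j m) n
     = (\<Sum>j\<in>A. c j * (jacobi_op a b ^^ i) (f j) n)"
proof (induction i arbitrary: n)
  case 0
  then show ?case by simp
next
  case (Suc i)
  then have "(jacobi_op a b ^^ i) (\<lambda>m. \<Sum>j\<in>A. c j * f j m)
      = (\<lambda>m. \<Sum>j\<in>A. c j * (jacobi_op a b ^^ i) (f j) m)"
    by auto
  then show ?case
    by (simp add: jacobi_op_sum)
qed

lemma funpow_jacobi_op_eigen:
  assumes "\<And>k. \<bar>k - n\<bar> < int i \<Longrightarrow> jacobi_op a b u k = x * u k"
  shows "(jacobi_op a b ^^ i) u n = x ^ i * u n"
  using assms
proof (induction i arbitrary: n)
  case 0
  then show ?case by simp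
next
  case (Suc i)
  have IH: "(jacobi_op a b ^^ i) u m = x ^ i * u m" if "\<bar>m - n\<bar> \<le> 1" for m
    by (rule Suc.IH) (use Suc.prems that in auto)
  have "(jacobi_op a b ^^ Suc i) u n = x ^ i * jacobi_op a b u n"
    unfolding funpow_jacobi_op_Suc by (simp add: IH jacobi_op_def algebra_simps)
  also have "jacobi_op a b u n = x * u n"
    by (rule Suc.prems) simp
  finally show ?case
    by simp
qed

lemma funpow_jacobi_op_unit_seq_outside:
  "int i < \<bar>k\<bar> \<Longrightarrow> (jacobi_op a b ^^ i) (unit_seq 0) k = 0"
proof (induction i arbitrary: k)
  case 0
  then show ?case by (simp add: unit_seq_def)
next
  case (Suc i)
  then show ?case
    unfolding funpow_jacobi_op_Suc by simp
qed

lemma funpow_jacobi_op_unit_seq_edge: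
  "(jacobi_op a b ^^ i) (unit_seq 0) (int i) = (\<Prod>j<i. a (int j))"
proof (induction i)
  case 0
  then show ?case by (simp add: unit_seq_def)
next
  case (Suc i)
  then show ?case
    unfolding funpow_jacobi_op_Suc by (simp add: funpow_jacobi_op_unit_seq_outside)
qed

lemma poly_op_eq_sum_degree_le:
  assumes "degree P \<le> N"
  shows "poly_op P T u n = (\<Sum>i\<le>N. coeff P i * (T ^^ i) u n)"
  unfolding poly_op_def
  by (rule sum.mono_neutral_left) (use assms in \<open>auto simp: coeff_eq_0\<close>)

lemma poly_op_diff: "poly_op (P - Q) T u n = poly_op P T u n - poly_op Q T u n"
proof -
  define N where "N = max (degree P) (degree Q)"
  have "degree (P - Q) \<le> N" "degree P \<le> N" "degree Q \<le> N"
    unfolding N_def by (auto intro: degree_diff_le_max)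
  then show ?thesis
    by (simp add: poly_op_eq_sum_degree_le left_diff_distrib sum_subtractf)
qed

lemma poly_op_jacobi_op_local:
  assumes "degree P \<le> N" and "\<And>k. \<bar>k - n\<bar> \<le> int N \<Longrightarrow> v k = w k"
  shows "poly_op P (jacobi_op a b) v n = poly_op P (jacobi_op a b) w n"
  unfolding poly_op_eq_sum_degree_le[OF assms(1)]
  by (intro sum.cong refl arg_cong[where f = "\<lambda>t. _ * t"] funpow_jacobi_op_local)
     (use assms(2) in auto)

lemma poly_op_jacobi_op_sum:
  "poly_op P (jacobi_op a b) (\<lambda>m. \<Sum>j\<in>A. c j * f j m) n
     = (\<Sum>j\<in>A. c j * poly_op P (jacobi_op a b) (f j) n)"
  by (simp add: poly_op_def funpow_jacobi_op_sum sum_distrib_left sum.swap[of _ A] algebra_simps)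

lemma poly_op_jacobi_op_eigen:
  assumes "degree P \<le> N" and "\<And>k. \<bar>k - n\<bar> < int N \<Longrightarrow> jacobi_op a b u k = x * u k"
  shows "poly_op P (jacobi_op a b) u n = poly P x * u n"
proof -
  have "poly_op P (jacobi_op a b) u n = (\<Sum>i\<le>degree P. coeff P i * (x ^ i * u n))"
    unfolding poly_op_def
    by (intro sum.cong refl arg_cong[where f = "\<lambda>t. _ * t"] funpow_jacobi_op_eigen)
       (use assms in auto)
  then show ?thesis
    by (simp add: poly_altdef sum_distrib_left algebra_simps)
qed

lemma poly_op_jacobi_op_commute:
  "poly_op P (jacobi_op a b) (jacobi_op a b u) = jacobi_op a b (poly_op P (jacobi_op a b) u)"
  by (rule ext) (simp add: poly_op_def jacobi_op_sum funpow_swap1)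

lemma poly_op_jacobi_op_unit_seq_degree:
  "poly_op Q (jacobi_op a b) (unit_seq 0) (int (degree Q))
     = lead_coeff Q * (\<Prod>j<degree Q. a (int j))"
proof -
  have "poly_op Q (jacobi_op a b) (unit_seq 0) (int (degree Q))
      = (\<Sum>i\<le>degree Q. if i = degree Q then lead_coeff Q * (\<Prod>j<degree Q. a (int j)) else 0)"
    unfolding poly_op_def
    by (intro sum.cong refl)
       (auto simp: funpow_jacobi_op_unit_seq_edge funpow_jacobi_op_unit_seq_outside)
  then show ?thesis
    by simp
qed

lemma poly_op_jacobi_op_unit_seq_eq_0_iff:
  assumes "\<And>m. a m \<noteq> 0"
  shows "(\<forall>n. poly_op Q (jacobi_op a b) (unit_seq 0) n = 0) \<longleftrightarrow> Q = 0"
proof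
  assume "\<forall>n. poly_op Q (jacobi_op a b) (unit_seq 0) n = 0"
  then have "lead_coeff Q * (\<Prod>j<degree Q. a (int j)) = 0"
    by (metis poly_op_jacobi_op_unit_seq_degree)
  then show "Q = 0"
    by (simp add: assms)
qed (simp add: poly_op_def)

section \<open>Transfer matrices and the discriminant\<close>

definition m2trace :: "pmat2 \<Rightarrow> real poly" where
  "m2trace M = M 0 0 + M 1 1"

definition m2det :: "pmat2 \<Rightarrow> real poly" where
  "m2det M = M 0 0 * M 1 1 - M 0 1 * M 1 0"

definition m2apply :: "pmat2 \<Rightarrow> real \<Rightarrow> (nat \<Rightarrow> real) \<Rightarrow> nat \<Rightarrow> real" where
  "m2apply M x w = (\<lambda>i. \<Sum>k<2. poly (M i k) x * w k)"

lemma discriminant_eq_m2trace: "discriminant p a b = m2trace (transfer_prod a b p)"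
  by (simp add: discriminant_def m2trace_def)

lemma sum_lessThan_2: "(\<Sum>k<(2::nat). f k) = f 0 + f 1"
  by (simp add: numeral_2_eq_2)

lemma m2mult_assoc: "m2mult (m2mult A B) C = m2mult A (m2mult B C)"
  by (simp add: m2mult_def sum_lessThan_2 algebra_simps)

lemma m2trace_m2mult_commute: "m2trace (m2mult A B) = m2trace (m2mult B A)"
  by (simp add: m2trace_def m2mult_def sum_lessThan_2 algebra_simps)

lemma m2det_m2mult: "m2det (m2mult A B) = m2det A * m2det B"
  by (simp add: m2det_def m2mult_def sum_lessThan_2 algebra_simps)

lemma m2det_transfer: "a n \<noteq> 0 \<Longrightarrow> m2det (transfer a b n) = 1"
  by (simp add: m2det_def transfer_def power2_eq_square mult_smult_left mult_smult_right)

lemma m2det_transfer_prod: "(\<And>m. a m \<noteq> 0) \<Longrightarrow> m2det (transfer_prod a b k) = 1"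
  by (induction k) (simp add: m2det_def m2id_def, simp add: m2det_m2mult m2det_transfer)

lemma m2apply_m2mult: "m2apply (m2mult A B) x w = m2apply A x (m2apply B x w)"
  by (simp add: m2apply_def m2mult_def sum_lessThan_2 poly_sum algebra_simps)

lemma m2apply_cayley_hamilton:
  assumes "i < 2"
  shows "m2apply M x (m2apply M x w) i
           = poly (m2trace M) x * m2apply M x w i - poly (m2det M) x * w i"
  using assms
  by (auto simp: m2apply_def m2trace_def m2det_def sum_lessThan_2 algebra_simps less_2_cases_iff)

lemma degree_transfer_prod: "degree (transfer_prod a b k i j) \<le> k"
proof (induction k arbitrary: i j)
  case 0
  then show ?case by (simp add: m2id_def)
next
  case (Suc k)
  have "degree (transfer a b (int (Suc k)) i l * transfer_prod a b k l j) \<le> 1 + k" for l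
  proof -
    have "degree (transfer a b (int (Suc k)) i l * transfer_prod a b k l j)
        \<le> degree (transfer a b (int (Suc k)) i l) + degree (transfer_prod a b k l j)"
      by (rule degree_mult_le)
    also have "\<dots> \<le> 1 + k"
      by (intro add_mono Suc.IH) (simp add: transfer_def)
    finally show ?thesis .
  qed
  then show ?case
    by (auto simp: m2mult_def intro: degree_sum_le)
qed

lemma degree_discriminant: "degree (discriminant p a b) \<le> p"
  unfolding discriminant_def by (intro degree_add_le degree_transfer_prod)

lemma transfer_shift: "transfer (\<lambda>n. a (n + s)) (\<lambda>n. b (n + s)) n = transfer a b (n + s)"
  by (simp add: transfer_def)

lemma transfer_prod_Suc_right:
  "transfer_prod a b (Suc k)
     = m2mult (transfer_prod (\<lambda>n. a (n + 1)) (\<lambda>n. b (n + 1)) k) (transfer a b 1)"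
proof (induction k)
  case 0
  show ?case
    by (rule ext)+ (simp add: m2mult_def m2id_def sum_lessThan_2 transfer_def)
next
  case (Suc k)
  then show ?case
    by (simp only: transfer_prod.simps m2mult_assoc transfer_shift) (simp add: add.commute)
qed

lemma periodic_paramsD:
  assumes "periodic_params p a b"
  shows "p \<ge> 1" and "a (n + int p) = a n" and "b (n + int p) = b n"
  using assms by (simp_all add: periodic_params_def)

lemma periodic_params_shift:
  "periodic_params p a b \<Longrightarrow> periodic_params p (\<lambda>n. a (n + s)) (\<lambda>n. b (n + s))"
  unfolding periodic_params_def by (metis add.assoc add.commute)

lemma discriminant_shift_1:
  assumes "periodic_params p a b"
  shows "discriminant p (\<lambda>n. a (n + 1)) (\<lambda>n. b (n + 1)) = discriminant p a b"
proof -
  let ?a = "\<lambda>n. a (n + 1)" and ?b = "\<lambda>n. b (n + 1)"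
  obtain q where q: "p = Suc q"
    using periodic_paramsD(1)[OF assms] by (cases p) auto
  have "a (int p + 1) = a 1" and "b (int p + 1) = b 1"
    using periodic_paramsD(2,3)[OF assms, of 1] by (simp_all add: add.commute)
  then have last: "transfer ?a ?b (int p) = transfer a b 1"
    unfolding transfer_shift transfer_def by (simp only:)
  have "discriminant p a b = m2trace (m2mult (transfer_prod ?a ?b q) (transfer a b 1))"
    by (simp only: discriminant_eq_m2trace q transfer_prod_Suc_right)
  also have "\<dots> = m2trace (m2mult (transfer a b 1) (transfer_prod ?a ?b q))"
    by (rule m2trace_m2mult_commute)
  also have "\<dots> = discriminant p ?a ?b"
    by (simp only: discriminant_eq_m2trace q transfer_prod.simps flip: last)
  finally show ?thesis ..
qed

lemma discriminant_shift:
  assumes "periodic_params p a b"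
  shows "discriminant p (\<lambda>n. a (n + s)) (\<lambda>n. b (n + s)) = discriminant p a b"
proof (induction s rule: int_induct[where k = 0])
  case base
  then show ?case by simp
next
  case (step1 i)
  then show ?case
    using discriminant_shift_1[OF periodic_params_shift[OF assms, of i]]
    by (simp add: algebra_simps)
next
  case (step2 i)
  then show ?case
    using discriminant_shift_1[OF periodic_params_shift[OF assms, of "i - 1"]]
    by (simp add: algebra_simps)
qed

section \<open>The magic formula\<close>

text \<open>The vector \<open>(u(m + 1), a(m) u(m))\<close> on which \<open>\<Lambda>\<^sub>m\<^sub>+\<^sub>1(x)\<close> acts; it is padded with zeros beyond
  index 1, matching \<^const>\<open>m2apply\<close>.\<close>
definition transfer_state :: "(int \<Rightarrow> real) \<Rightarrow> (int \<Rightarrow> real) \<Rightarrow> int \<Rightarrow> nat \<Rightarrow> real" where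
  "transfer_state a u m = (\<lambda>i. if i = 0 then u (m + 1) else if i = 1 then a m * u m else 0)"

lemma transfer_state_step:
  assumes "a (m + 1) \<noteq> 0" and "jacobi_op a b u (m + 1) = x * u (m + 1)"
  shows "transfer_state a u (m + 1) = m2apply (transfer a b (m + 1)) x (transfer_state a u m)"
proof -
  have "u (m + 2) = (x * u (m + 1) - b (m + 1) * u (m + 1) - a m * u m) / a (m + 1)"
    using assms by (simp add: jacobi_op_def field_simps)
  then show ?thesis
    using assms(1)
    by (auto simp: transfer_state_def m2apply_def transfer_def sum_lessThan_2 field_simps power2_eq_square)
qed

lemma transfer_state_transfer_prod:
  assumes "\<And>m. a m \<noteq> 0"
    and "\<And>k. s < k \<Longrightarrow> k \<le> s + int j \<Longrightarrow> jacobi_op a b u k = x * u k"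
  shows "transfer_state a u (s + int j)
           = m2apply (transfer_prod (\<lambda>n. a (n + s)) (\<lambda>n. b (n + s)) j) x (transfer_state a u s)"
  using assms(2)
proof (induction j)
  case 0
  show ?case
    by (rule ext) (simp add: transfer_state_def m2apply_def m2id_def sum_lessThan_2)
next
  case (Suc j)
  have "transfer_state a u (s + int (Suc j)) = transfer_state a u (s + int j + 1)"
    by (simp add: algebra_simps)
  also have "\<dots> = m2apply (transfer a b (s + int j + 1)) x (transfer_state a u (s + int j))"
    by (rule transfer_state_step) (use assms(1) Suc.prems in auto)
  also have "\<dots> = m2apply (transfer_prod (\<lambda>n. a (n + s)) (\<lambda>n. b (n + s)) (Suc j)) x
                     (transfer_state a u s)"
    using Suc by (simp add: m2apply_m2mult transfer_shift algebra_simps)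
  finally show ?case .
qed

lemma eigensolution_discriminant_recurrence:
  assumes "periodic_params p a b" and "\<And>m. a m \<noteq> 0"
    and "\<And>k. n - int p < k \<Longrightarrow> k \<le> n + int p \<Longrightarrow> jacobi_op a b u k = x * u k"
  shows "u (n + int p) + u (n - int p) = poly (discriminant p a b) x * u n"
proof -
  define s where "s = n - int p"
  define M where "M = transfer_prod (\<lambda>k. a (k + s)) (\<lambda>k. b (k + s)) p"
  have shift_p: "(\<lambda>k. f (k + n)) = (\<lambda>k. f (k + s))" if "\<And>k. f (k + int p) = f k" for f :: "int \<Rightarrow> real"
    using that[of "_ + s"] by (simp add: s_def algebra_simps)
  have first: "transfer_state a u n = m2apply M x (transfer_state a u s)"
    using transfer_state_transfer_prod[where s = s and j = p] assms(2,3) by (simp add: M_def s_def)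
  have "transfer_state a u (n + int p)
      = m2apply (transfer_prod (\<lambda>k. a (k + n)) (\<lambda>k. b (k + n)) p) x (transfer_state a u n)"
    by (rule transfer_state_transfer_prod) (use assms(2,3) in auto)
  also have "transfer_prod (\<lambda>k. a (k + n)) (\<lambda>k. b (k + n)) p = M"
    unfolding M_def by (simp only: shift_p periodic_paramsD[OF assms(1)])
  finally have second: "transfer_state a u (n + int p) = m2apply M x (transfer_state a u n)" .
  have det: "m2det M = 1"
    unfolding M_def by (rule m2det_transfer_prod) (rule assms(2))
  have trace: "m2trace M = discriminant p a b"
    using discriminant_shift[OF assms(1), of s] by (simp only: M_def discriminant_eq_m2trace)
  have "transfer_state a u (n + int p) 1
      = poly (m2trace M) x * transfer_state a u n 1 - poly (m2det M) x * transfer_state a u s 1"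
    unfolding second using m2apply_cayley_hamilton[of 1 M x "transfer_state a u s"] first by simp
  then have "a (n + int p) * u (n + int p) = poly (discriminant p a b) x * (a n * u n) - a s * u s"
    by (simp add: transfer_state_def det trace)
  moreover have "a (n + int p) = a n" and "a s = a n"
    using periodic_paramsD(2)[OF assms(1), of s] by (simp_all add: periodic_paramsD[OF assms(1)] s_def)
  ultimately have "a n * (u (n + int p) + u (n - int p)) = a n * (poly (discriminant p a b) x * u n)"
    by (simp add: s_def algebra_simps)
  then show ?thesis
    using assms(2)[of n] by simp
qed

text \<open>The value at \<open>s + j\<close> of the solution of \<open>J u = x u\<close> with \<open>u(s) = c0\<close>, \<open>u(s + 1) = c1\<close>,
  as a polynomial in \<open>x\<close>.\<close>
fun eigen_poly :: "(int \<Rightarrow> real) \<Rightarrow> (int \<Rightarrow> real) \<Rightarrow> int \<Rightarrow> real \<Rightarrow> real \<Rightarrow> nat \<Rightarrow> real poly" where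
  "eigen_poly a b s c0 c1 0 = [:c0:]"
| "eigen_poly a b s c0 c1 (Suc 0) = [:c1:]"
| "eigen_poly a b s c0 c1 (Suc (Suc j)) = smult (1 / a (s + int j + 1))
     ([:- b (s + int j + 1), 1:] * eigen_poly a b s c0 c1 (Suc j)
      - smult (a (s + int j)) (eigen_poly a b s c0 c1 j))"

definition eigen_seq :: "(int \<Rightarrow> real) \<Rightarrow> (int \<Rightarrow> real) \<Rightarrow> int \<Rightarrow> real \<Rightarrow> real \<Rightarrow> real \<Rightarrow> int \<Rightarrow> real" where
  "eigen_seq a b s c0 c1 x m = (if s \<le> m then poly (eigen_poly a b s c0 c1 (nat (m - s))) x else 0)"

lemma eigen_seq_at: "eigen_seq a b s c0 c1 x (s + int j) = poly (eigen_poly a b s c0 c1 j) x"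
  by (simp add: eigen_seq_def)

lemma jacobi_op_eigen_seq:
  assumes "a k \<noteq> 0" and "s < k"
  shows "jacobi_op a b (eigen_seq a b s c0 c1 x) k = x * eigen_seq a b s c0 c1 x k"
proof -
  define j where "j = nat (k - s - 1)"
  have "k - 1 = s + int j" and k: "k = s + int (Suc j)" and "k + 1 = s + int (Suc (Suc j))"
    using assms(2) by (simp_all add: j_def)
  then have "jacobi_op a b (eigen_seq a b s c0 c1 x) k
      = a (s + int j) * poly (eigen_poly a b s c0 c1 j) x
        + b (s + int j + 1) * poly (eigen_poly a b s c0 c1 (Suc j)) x
        + a (s + int j + 1) * poly (eigen_poly a b s c0 c1 (Suc (Suc j))) x"
    by (simp only: jacobi_op_def eigen_seq_at) (simp add: algebra_simps)
  also have "\<dots> = x * poly (eigen_poly a b s c0 c1 (Suc j)) x"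
    using assms(1) k by (simp add: field_simps)
  also have "poly (eigen_poly a b s c0 c1 (Suc j)) x = eigen_seq a b s c0 c1 x k"
    by (simp only: k eigen_seq_at)
  finally show ?thesis .
qed

lemma degree_eigen_poly_0_1:
  assumes "\<And>m. a m \<noteq> 0"
  shows "eigen_poly a b s 0 1 (Suc j) \<noteq> 0 \<and> degree (eigen_poly a b s 0 1 (Suc j)) = j"
proof -
  let ?P = "eigen_poly a b s 0 1"
  have "?P (Suc j) \<noteq> 0 \<and> degree (?P (Suc j)) = j \<and> degree (?P j) < Suc j"
  proof (induction j)
    case 0
    then show ?case by simp
  next
    case (Suc j)
    have "degree ([:- b (s + int j + 1), 1:] * ?P (Suc j)) = Suc j"
      using Suc.IH by (subst degree_mult_eq) auto
    moreover have "degree (smult (a (s + int j)) (?P j)) < Suc j"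
      using Suc.IH by simp
    ultimately have "degree ([:- b (s + int j + 1), 1:] * ?P (Suc j) - smult (a (s + int j)) (?P j))
        = Suc j"
      by (metis degree_add_eq_left degree_minus diff_conv_add_uminus)
    then have "degree (?P (Suc (Suc j))) = Suc j"
      using assms[of "s + int j + 1"] by simp
    moreover from this have "?P (Suc (Suc j)) \<noteq> 0"
      by (metis degree_0 Zero_not_Suc)
    ultimately show ?case
      using Suc.IH by simp
  qed
  then show ?thesis by simp
qed

lemma sum_smult_degree_eq_0_imp:
  fixes P :: "nat \<Rightarrow> 'a::idom poly"
  assumes "\<And>j. j < N \<Longrightarrow> P j \<noteq> 0 \<and> degree (P j) = j"
    and "(\<Sum>j<N. smult (c j) (P j)) = 0" and "j < N"
  shows "c j = 0"
  using assms
proof (induction N arbitrary: j)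
  case 0
  then show ?case by simp
next
  case (Suc N)
  have "coeff (\<Sum>j<N. smult (c j) (P j)) N = 0"
    unfolding coeff_sum using Suc.prems(1) by (intro sum.neutral) (simp add: coeff_eq_0)
  then have "coeff (\<Sum>j<Suc N. smult (c j) (P j)) N = c N * lead_coeff (P N)"
    using Suc.prems(1)[of N] by simp
  moreover have "coeff (\<Sum>j<Suc N. smult (c j) (P j)) N = 0"
    using Suc.prems(2) by (metis coeff_0)
  moreover have "lead_coeff (P N) \<noteq> 0"
    using Suc.prems(1)[of N] by (metis leading_coeff_0_iff lessI)
  ultimately have last: "c N = 0"
    by simp
  show ?case
  proof (cases "j = N")
    case False
    then show ?thesis
      using Suc.prems last by (intro Suc.IH) auto
  qed (use last in simp)
qed

lemma functional_eq_window_sum: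
  fixes F :: "(int \<Rightarrow> real) \<Rightarrow> real"
  assumes local: "\<And>v w. (\<And>k. s \<le> k \<Longrightarrow> k \<le> s + int N \<Longrightarrow> v k = w k) \<Longrightarrow> F v = F w"
    and linear: "\<And>c f. F (\<lambda>m. \<Sum>j\<le>N. c j * f j m) = (\<Sum>j\<le>N. c j * F (f j))"
  shows "F v = (\<Sum>j\<le>N. v (s + int j) * F (unit_seq (s + int j)))"
proof -
  have "F v = F (\<lambda>m. \<Sum>j\<le>N. v (s + int j) * unit_seq (s + int j) m)"
  proof (rule local)
    fix k
    assume "s \<le> k" and "k \<le> s + int N"
    then have "(\<Sum>j\<le>N. v (s + int j) * unit_seq (s + int j) k)
        = (\<Sum>j\<le>N. if j = nat (k - s) then v k else 0)"
      by (intro sum.cong) (auto simp: unit_seq_def)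
    also have "\<dots> = v k"
      using \<open>k \<le> s + int N\<close> by simp
    finally show "v k = (\<Sum>j\<le>N. v (s + int j) * unit_seq (s + int j) k)" ..
  qed
  also have "\<dots> = (\<Sum>j\<le>N. v (s + int j) * F (unit_seq (s + int j)))"
    by (rule linear)
  finally show ?thesis .
qed

lemma eigen_seq_window_sum_eq_0_imp:
  assumes "\<And>m. a m \<noteq> 0"
    and "\<And>c0 c1 x. (\<Sum>j\<le>N. eigen_seq a b s c0 c1 x (s + int j) * \<beta> j) = 0"
    and "j \<le> N"
  shows "\<beta> j = 0"
proof -
  have "poly (\<Sum>j<N. smult (\<beta> (Suc j)) (eigen_poly a b s 0 1 (Suc j))) x = 0" for x
    using assms(2)[of 0 1 x] by (simp add: sum.atMost_shift poly_sum eigen_seq_at mult.commute)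
  then have "(\<Sum>j<N. smult (\<beta> (Suc j)) (eigen_poly a b s 0 1 (Suc j))) = 0"
    using poly_all_0_iff_0 by blast
  then have tail: "\<beta> (Suc i) = 0" if "i < N" for i
    using sum_smult_degree_eq_0_imp[where P = "\<lambda>j. eigen_poly a b s 0 1 (Suc j)"
        and c = "\<lambda>j. \<beta> (Suc j)"] degree_eigen_poly_0_1[where a = a, OF assms(1)] that by blast
  then have "(\<Sum>i<N. eigen_seq a b s 1 0 0 (s + int (Suc i)) * \<beta> (Suc i)) = 0"
    by (intro sum.neutral) simp
  then have "\<beta> 0 = 0"
    using assms(2)[of 1 0 0] by (simp add: sum.atMost_shift eigen_seq_at del: of_nat_Suc)
  then show ?thesis
    using tail assms(3) by (cases j) auto
qed

theorem poly_op_discriminant_jacobi_op: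
  assumes "periodic_params p a b" and "\<And>m. a m \<noteq> 0"
  shows "poly_op (discriminant p a b) (jacobi_op a b) u n = u (n - int p) + u (n + int p)"
proof -
  define \<Delta> where "\<Delta> = discriminant p a b"
  define s where "s = n - int p"
  define F where "F v = poly_op \<Delta> (jacobi_op a b) v n - v (n - int p) - v (n + int p)" for v
  have deg: "degree \<Delta> \<le> p"
    unfolding \<Delta>_def by (rule degree_discriminant)
  have window: "F v = (\<Sum>j\<le>2 * p. v (s + int j) * F (unit_seq (s + int j)))" for v
  proof (rule functional_eq_window_sum)
    show "F v = F w" if "\<And>k. s \<le> k \<Longrightarrow> k \<le> s + int (2 * p) \<Longrightarrow> v k = w k" for v w
      unfolding F_def using that poly_op_jacobi_op_local[OF deg, of n v w]
      by (simp add: s_def abs_le_iff)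
    show "F (\<lambda>m. \<Sum>j\<le>2 * p. c j * f j m) = (\<Sum>j\<le>2 * p. c j * F (f j))" for c f
      by (simp add: F_def poly_op_jacobi_op_sum sum_subtractf right_diff_distrib)
  qed
  have "F (eigen_seq a b s c0 c1 x) = 0" for c0 c1 x
  proof -
    let ?v = "eigen_seq a b s c0 c1 x"
    have eig: "jacobi_op a b ?v k = x * ?v k" if "s < k" for k
      using jacobi_op_eigen_seq assms(2) that by blast
    have "poly_op \<Delta> (jacobi_op a b) ?v n = poly \<Delta> x * ?v n"
      by (rule poly_op_jacobi_op_eigen[OF deg], rule eig) (auto simp: s_def)
    moreover have "?v (n + int p) + ?v (n - int p) = poly \<Delta> x * ?v n"
      unfolding \<Delta>_def by (rule eigensolution_discriminant_recurrence[OF assms], rule eig) (auto simp: s_def)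
    ultimately show ?thesis
      by (simp add: F_def)
  qed
  then have "(\<Sum>j\<le>2 * p. eigen_seq a b s c0 c1 x (s + int j) * F (unit_seq (s + int j))) = 0"
    for c0 c1 x
    by (simp flip: window)
  then have "F (unit_seq (s + int j)) = 0" if "j \<le> 2 * p" for j
    using eigen_seq_window_sum_eq_0_imp[where a = a and \<beta> = "\<lambda>j. F (unit_seq (s + int j))",
        OF assms(2)] that by blast
  then have "F u = 0"
    using window[of u] by simp
  then show ?thesis
    by (simp add: F_def \<Delta>_def)
qed

lemma periodic_params_if_poly_op_eq_shifts:
  assumes "p \<ge> 1"
    and "\<And>u. finite {k. u k \<noteq> 0} \<Longrightarrow>
           poly_op P (jacobi_op a b) u = (\<lambda>k. u (k - int p) + u (k + int p))"
  shows "periodic_params p a b"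
proof -
  \<comment> \<open>\<open>J\<close> commutes with \<open>P(J) = S\<^sup>p + S\<^sup>-\<^sup>p\<close>; evaluated on unit vectors this compares \<open>a\<close>, \<open>b\<close>
    with their shifts by \<open>p\<close>.\<close>
  have commute: "jacobi_op a b (\<lambda>k. unit_seq m (k - int p) + unit_seq m (k + int p))
      = (\<lambda>k. jacobi_op a b (unit_seq m) (k - int p) + jacobi_op a b (unit_seq m) (k + int p))" for m
  proof -
    have "finite {k. jacobi_op a b (unit_seq m) k \<noteq> 0}"
      by (rule finite_subset[of _ "{m - 1, m, m + 1}"]) (auto simp: jacobi_op_def unit_seq_def)
    moreover have "finite {k. unit_seq m k \<noteq> 0}"
      by (simp add: unit_seq_def)
    ultimately show ?thesis
      using poly_op_jacobi_op_commute[of P a b "unit_seq m"] by (simp add: assms(2))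
  qed
  have "a (m + int p) = a m" for m
    using fun_cong[OF commute[of m], of "m + int p + 1"] assms(1)
    by (simp add: jacobi_op_def unit_seq_def)
  moreover have "b (m + int p) = b m" for m
    using fun_cong[OF commute[of m], of "m + int p"] assms(1)
    by (simp add: jacobi_op_def unit_seq_def)
  ultimately show ?thesis
    using assms(1) by (simp add: periodic_params_def)
qed

lemma discriminant_eq_if_poly_op_unit_seq_eq_shifts:
  assumes "periodic_params p a b" and "\<And>m. a m \<noteq> 0"
    and "poly_op P (jacobi_op a b) (unit_seq 0) = (\<lambda>k. unit_seq 0 (k - int p) + unit_seq 0 (k + int p))"
  shows "discriminant p a b = P"
proof -
  have "poly_op (discriminant p a b - P) (jacobi_op a b) (unit_seq 0) n = 0" for n
    using poly_op_discriminant_jacobi_op[OF assms(1,2)] fun_cong[OF assms(3), of n]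
    by (simp add: poly_op_diff)
  then have "discriminant p a b - P = 0"
    using poly_op_jacobi_op_unit_seq_eq_0_iff[where a = a, OF assms(2)] by blast
  then show ?thesis
    by simp
qed

theorem theorem3p1:
  fixes p :: nat and a0 b0 a b :: "int \<Rightarrow> real"
  assumes "jacobi_params a0 b0" and "periodic_params p a0 b0"
    and "jacobi_params a b"
  shows "(\<forall>u. l2_seq u \<longrightarrow>
            poly_op (discriminant p a0 b0) (jacobi_op a b) u
              = (\<lambda>n. (shift_right ^^ p) u n + (shift_left ^^ p) u n))
         \<longleftrightarrow> (a, b) \<in> iso_torus p a0 b0"
  (is "?magic \<longleftrightarrow> _")
proof -
  have a_nonzero: "a m \<noteq> 0" for m
    using assms(3) unfolding jacobi_params_def by (metis less_irrefl)
  have shifts: "(\<lambda>n. (shift_right ^^ p) u n + (shift_left ^^ p) u n) = (\<lambda>n. u (n - int p) + u (n + int p))"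
    for u
    by (simp add: funpow_shift_right funpow_shift_left)
  show ?thesis
  proof
    assume ?magic
    then have finite_support: "poly_op (discriminant p a0 b0) (jacobi_op a b) u
        = (\<lambda>k. u (k - int p) + u (k + int p))" if "finite {k. u k \<noteq> 0}" for u
      using l2_seq_finite_support[OF that] by (simp add: shifts)
    have periodic: "periodic_params p a b"
      using periodic_paramsD(1)[OF assms(2)] finite_support by (rule periodic_params_if_poly_op_eq_shifts)
    moreover have "discriminant p a b = discriminant p a0 b0"
      by (rule discriminant_eq_if_poly_op_unit_seq_eq_shifts[OF periodic a_nonzero])
         (rule finite_support, simp add: unit_seq_def)
    ultimately show "(a, b) \<in> iso_torus p a0 b0"
      using assms(3) by (simp add: iso_torus_def)
  next
    assume "(a, b) \<in> iso_torus p a0 b0"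
    then have periodic: "periodic_params p a b" and "discriminant p a b = discriminant p a0 b0"
      by (simp_all add: iso_torus_def)
    then show ?magic
      using poly_op_discriminant_jacobi_op[OF periodic a_nonzero] by (simp add: shifts fun_eq_iff)
  qed
qed

end
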